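(* Let $0<\eta\leq1$ be real and $d\geq1$ an integer. Let $F$ be a 3-graph and $A,B\subseteq V(F)$ with $A\cap B=\emptyset$, $|A|\geq 4d\,e^d/\eta^d$ and $|B|\geq d/\eta$. Assume that $A$ induces a clique in $F$ and $d(A,A,B)\geq\eta$. Then $F$ contains a tight path of the form $a_1a_2b_1a_3a_4b_2\dots a_{2d-1}a_{2d}b_da_{2d+1}a_{2d+2}$ with distinct vertices $a_i\in A$ ($i\in[2d+2]$) and $b_j\in B$ ($j\in[d]$).
   Context: A 3-graph is a 3-uniform hypergraph. A tight path with vertex sequence $v_1v_2\dots v_s$ has edges $\{v_i,v_{i+1},v_{i+2}\}$ for $i\in[s-2]$. For $A,B,C\subseteq V(F)$, $E(A,B,C)$ is the set of ordered triples $(a,b,c)\in A\times B\times C$ of distinct vertices with $abc\in E(F)$, and $d(A,B,C)=|E(A,B,C)|$ divided by the number of ordered triples of distinct vertices in $A\times B\times C$. *)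

theory Defs
  imports Complex_Main
begin

definition three_graph :: "'a set \<Rightarrow> 'a set set \<Rightarrow> bool" where
  "three_graph V E \<longleftrightarrow> finite V \<and> (\<forall>e\<in>E. e \<subseteq> V \<and> card e = 3)"

definition dist_triples :: "'a set \<Rightarrow> 'a set \<Rightarrow> 'a set \<Rightarrow> ('a \<times> 'a \<times> 'a) set" where
  "dist_triples X Y Z = {(x, y, z). x \<in> X \<and> y \<in> Y \<and> z \<in> Z \<and> x \<noteq> y \<and> y \<noteq> z \<and> x \<noteq> z}"

definition edge_triples :: "'a set set \<Rightarrow> 'a set \<Rightarrow> 'a set \<Rightarrow> 'a set \<Rightarrow> ('a \<times> 'a \<times> 'a) set" where
  "edge_triples E X Y Z = {(x, y, z). (x, y, z) \<in> dist_triples X Y Z \<and> {x, y, z} \<in> E}"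

definition density3 :: "'a set set \<Rightarrow> 'a set \<Rightarrow> 'a set \<Rightarrow> 'a set \<Rightarrow> real" where
  "density3 E X Y Z = real (card (edge_triples E X Y Z)) / real (card (dist_triples X Y Z))"

definition clique3 :: "'a set set \<Rightarrow> 'a set \<Rightarrow> bool" where
  "clique3 E A \<longleftrightarrow> (\<forall>x\<in>A. \<forall>y\<in>A. \<forall>z\<in>A. x \<noteq> y \<and> y \<noteq> z \<and> x \<noteq> z \<longrightarrow> {x, y, z} \<in> E)"

definition tight_path :: "'a set set \<Rightarrow> 'a list \<Rightarrow> bool" where
  "tight_path E vs \<longleftrightarrow> distinct vs \<and>
     (\<forall>i. i + 2 < length vs \<longrightarrow> {vs ! i, vs ! (i + 1), vs ! (i + 2)} \<in> E)"

end

theory Submission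
  imports Defs
begin

text \<open>
  For distinct x, y in A let N(x,y) be their common neighbourhood in B. The density hypothesis
  says that |N(x,y)| has mean \<mu> \<ge> \<eta>|B| over the |A|(|A|-1) ordered pairs. Double counting the
  pairs (S, (x,y)) with S a d-subset of N(x,y), and using convexity of t \<mapsto> (t choose d), some
  d-set S \<subseteq> B lies in N(x,y) for at least
  |A|(|A|-1) (\<mu> choose d) / (|B| choose d) \<ge> |A|(|A|-1) \<eta>^d d!/d^d > 4d|A|
  ordered pairs. These pairs form a graph on A of average degree above 4d, so it contains a path
  a1 a2 ... a(2d+2). Inserting the elements b1, ..., bd of S after every second vertex gives the
  tight path, since each of its triples consists of an edge of that graph and a vertex of S.
  No triple lies inside A.
\<close>

lemma Chebyshev_sum_similarly_ordered:
  fixes a b :: "'i \<Rightarrow> real"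
  assumes "finite P"
    and "\<And>p q. p \<in> P \<Longrightarrow> q \<in> P \<Longrightarrow> 0 \<le> (a p - a q) * (b p - b q)"
  shows "(\<Sum>p\<in>P. a p) * (\<Sum>p\<in>P. b p) \<le> card P * (\<Sum>p\<in>P. a p * b p)"
proof -
  have "0 \<le> (\<Sum>p\<in>P. \<Sum>q\<in>P. (a p - a q) * (b p - b q))"
    by (intro sum_nonneg) (simp add: assms)
  also have "\<dots> = 2 * card P * (\<Sum>p\<in>P. a p * b p) - 2 * ((\<Sum>p\<in>P. a p) * (\<Sum>p\<in>P. b p))"
    by (simp add: algebra_simps sum.distrib sum_subtractf sum_distrib_left sum_distrib_right
        sum.swap[of "\<lambda>p q. a q * b p"])
  finally show ?thesis by simp
qed

text \<open>
  Jensen's inequality for t \<mapsto> (t choose k), by induction on k: since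
  (k+1) (t choose k+1) = (t choose k) (t - k), the step is Chebyshev's inequality for the
  similarly ordered families (x p choose k) and x p - k.
\<close>

lemma card_mult_gbinomial_mean_le_sum_binomial:
  fixes x :: "'i \<Rightarrow> nat"
  assumes "finite P" "P \<noteq> {}"
    and "real k \<le> (\<Sum>p\<in>P. real (x p)) / card P"
  shows "card P * ((\<Sum>p\<in>P. real (x p)) / card P gchoose k) \<le> (\<Sum>p\<in>P. real (x p choose k))"
  using assms(3)
proof (induction k)
  case 0
  then show ?case by simp
next
  case (Suc k)
  define \<mu> where "\<mu> = (\<Sum>p\<in>P. real (x p)) / card P"
  have card_pos: "0 < card P"
    using assms(1,2) by (simp add: card_gt_0_iff)
  have gbinomial_Suc_mult: "real (Suc k) * (a gchoose Suc k) = (a gchoose k) * (a - k)" for a :: real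
    using gbinomial_mult_1[of a k] by (simp add: algebra_simps)
  have monotone: "0 \<le> (real (x p choose k) - real (x q choose k)) * (real (x p) - k - (real (x q) - k))"
    for p q
  proof (cases "x p \<le> x q")
    case True
    then have "x p choose k \<le> x q choose k"
      by (rule binomial_right_mono)
    with True show ?thesis
      by (auto intro: mult_nonpos_nonpos)
  next
    case False
    then have "x q choose k \<le> x p choose k"
      by (intro binomial_right_mono) simp
    with False show ?thesis
      by (auto intro: mult_nonneg_nonneg)
  qed
  have "card P * (real (Suc k) * (\<mu> gchoose Suc k)) = card P * (\<mu> gchoose k) * (\<mu> - k)"
    by (simp only: gbinomial_Suc_mult mult.assoc)
  also have "\<dots> \<le> (\<Sum>p\<in>P. real (x p choose k)) * (\<mu> - k)"
    using Suc by (intro mult_right_mono) (simp_all add: \<mu>_def)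
  also have "\<dots> = (\<Sum>p\<in>P. real (x p choose k)) * (\<Sum>p\<in>P. real (x p) - k) / card P"
    using card_pos by (simp add: \<mu>_def sum_subtractf field_simps)
  also have "\<dots> \<le> (\<Sum>p\<in>P. real (x p choose k) * (real (x p) - k))"
    using Chebyshev_sum_similarly_ordered[OF assms(1) monotone] card_pos
    by (simp add: divide_le_eq mult.commute)
  also have "\<dots> = real (Suc k) * (\<Sum>p\<in>P. real (x p choose Suc k))"
    unfolding sum_distrib_left binomial_gbinomial gbinomial_Suc_mult ..
  finally have "real (Suc k) * (card P * (\<mu> gchoose Suc k)) \<le> real (Suc k) * (\<Sum>p\<in>P. real (x p choose Suc k))"
    by (simp only: mult.left_commute[of "real (Suc k)"])
  then show ?case
    unfolding \<mu>_def by (rule mult_left_le_imp_le) simp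
qed

text \<open>Factorwise, (s - i) / (m - i) \<ge> \<eta> (d - i) / d.\<close>

lemma gbinomial_ratio_lower_bound:
  fixes \<eta> m s :: real
  assumes "0 < \<eta>" "\<eta> \<le> 1" "real d \<le> \<eta> * m" "\<eta> * m \<le> s"
  shows "\<eta> ^ d * fact d / real d ^ d * (m gchoose d) \<le> s gchoose d"
proof -
  have factor_le: "\<eta> * (real d - i) / d * (m - i) \<le> s - i" if "i < d" for i
  proof -
    have "\<eta> * i \<le> \<eta> * d"
      using assms that by (intro mult_left_mono) auto
    moreover have "\<eta> * (real d + m - i) = \<eta> * d + \<eta> * m - \<eta> * i"
      by (simp add: algebra_simps)
    ultimately have "d \<le> \<eta> * (real d + m - i)"
      using assms by linarith
    have "\<eta> * (real d - i) * (m - i) = d * (\<eta> * m) - i * (\<eta> * (real d + m - i))"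
      by (simp add: algebra_simps)
    also have "\<dots> \<le> d * (\<eta> * m) - i * d"
      using \<open>d \<le> \<eta> * (real d + m - i)\<close> by (simp add: mult_left_mono)
    also have "\<dots> \<le> d * (s - i)"
      using mult_left_mono[OF assms(4), of d] by (simp add: algebra_simps)
    finally show ?thesis
      using that by (simp add: field_simps)
  qed
  have "0 \<le> \<eta> * m"
    using assms(3) by linarith
  then have "0 \<le> m"
    using assms(1) by (simp add: zero_le_mult_iff)
  then have "real d \<le> m"
    using assms(2,3) mult_right_mono[OF assms(2), of m] by linarith
  then have factor_nonneg: "0 \<le> \<eta> * (real d - i) / d * (m - i)" if "i < d" for i
    using assms(1) that by simp
  have scale: "\<eta> ^ d * fact d / real d ^ d = (\<Prod>i<d. \<eta> * (real d - i) / d)"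
    by (simp add: prod_dividef prod.distrib fact_prod_rev lessThan_atLeast0 of_nat_diff)
  have "\<eta> ^ d * fact d / real d ^ d * (m gchoose d) * fact d
      = (\<Prod>i<d. \<eta> * (real d - i) / d) * (\<Prod>i<d. m - i)"
    by (simp only: scale mult.assoc gbinomial_mult_fact' lessThan_atLeast0)
  also have "\<dots> = (\<Prod>i<d. \<eta> * (real d - i) / d * (m - i))"
    by (rule prod.distrib[symmetric])
  also have "\<dots> \<le> (\<Prod>i<d. s - i)"
    using factor_le factor_nonneg by (intro prod_mono) simp
  also have "\<dots> = (s gchoose d) * fact d"
    by (simp add: gbinomial_mult_fact' lessThan_atLeast0)
  finally show ?thesis
    by (rule mult_right_le_imp_le) simp
qed

lemma power_self_le_exp_mult_fact:
  assumes "0 < d"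
  shows "real d ^ d \<le> exp (real d - 1) * fact d"
  using assms
proof (induction d rule: nat_induct_non_zero)
  case 1
  then show ?case by simp
next
  case (Suc d)
  have "(1 + 1 / real d) ^ d \<le> exp 1"
    using Suc by (intro exp_ge_one_plus_x_over_n_power_n) auto
  then have "(real d + 1) ^ d \<le> real d ^ d * exp 1"
    using Suc by (simp add: power_divide field_simps flip: power_mult_distrib)
  also have "\<dots> \<le> exp 1 * (exp (real d - 1) * fact d)"
    using Suc.IH by (simp add: mult.commute)
  finally have "real (Suc d) ^ Suc d \<le> (real d + 1) * (exp 1 * (exp (real d - 1) * fact d))"
    by (simp add: add.commute mult_left_mono)
  also have "\<dots> = exp (real (Suc d) - 1) * fact (Suc d)"
    by (simp add: exp_add[symmetric] algebra_simps)
  finally show ?case .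
qed

text \<open>Deleting a vertex of degree at most k loses at most 2k ordered edges.\<close>

lemma dense_graph_has_min_degree_subgraph:
  fixes G :: "('a \<times> 'a) set"
  assumes "sym G" "finite A" "2 * k * card A < card (G \<inter> A \<times> A)"
  shows "\<exists>A'\<subseteq>A. A' \<noteq> {} \<and> (\<forall>v\<in>A'. k < card {w\<in>A'. (v, w) \<in> G})"
  using assms(2,3)
proof (induction "card A" arbitrary: A rule: less_induct)
  case less
  show ?case
  proof (cases "\<forall>v\<in>A. k < card {w\<in>A. (v, w) \<in> G}")
    case True
    moreover have "A \<noteq> {}"
      using less.prems by auto
    ultimately show ?thesis
      by blast
  next
    case False
    then obtain v where v: "v \<in> A" "card {w\<in>A. (v, w) \<in> G} \<le> k"
      by (auto simp: not_less)
    define N where "N = {w\<in>A. (v, w) \<in> G}"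
    have "G \<inter> A \<times> A \<subseteq> (G \<inter> (A - {v}) \<times> (A - {v})) \<union> {v} \<times> N \<union> N \<times> {v}"
      using assms(1) by (auto simp: N_def dest: symD)
    moreover have "finite N"
      using less.prems(1) by (simp add: N_def)
    ultimately have
      "card (G \<inter> A \<times> A) \<le> card (G \<inter> (A - {v}) \<times> (A - {v}) \<union> {v} \<times> N \<union> N \<times> {v})"
      using less.prems(1) by (intro card_mono) auto
    also have "\<dots> \<le> card (G \<inter> (A - {v}) \<times> (A - {v})) + card ({v} \<times> N) + card (N \<times> {v})"
      by (meson card_Un_le add_right_mono order_trans)
    finally have "card (G \<inter> A \<times> A) \<le> card (G \<inter> (A - {v}) \<times> (A - {v})) + card N + card N"
      by (simp add: card_cartesian_product)
    moreover have "card A = Suc (card (A - {v}))"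
      using less.prems(1) v(1) by (rule card.remove)
    ultimately have dense: "2 * k * card (A - {v}) < card (G \<inter> (A - {v}) \<times> (A - {v}))"
      using less.prems(2) v(2) by (simp add: N_def)
    have "\<exists>A'\<subseteq>A - {v}. A' \<noteq> {} \<and> (\<forall>w\<in>A'. k < card {u\<in>A'. (w, u) \<in> G})"
      using less.hyps[OF card_Diff1_less[OF less.prems(1) v(1)] _ dense] less.prems(1) by simp
    then show ?thesis
      by blast
  qed
qed

lemma min_degree_graph_has_path:
  fixes G :: "('a \<times> 'a) set"
  assumes "irrefl G" "finite A" "A \<noteq> {}" "\<forall>v\<in>A. L \<le> card {w\<in>A. (v, w) \<in> G}"
  shows "\<exists>xs. length xs = Suc L \<and> distinct xs \<and> set xs \<subseteq> A \<and>
    successively (\<lambda>x y. (x, y) \<in> G) xs"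
proof -
  have "\<exists>xs. length xs = Suc j \<and> distinct xs \<and> set xs \<subseteq> A \<and>
      successively (\<lambda>x y. (x, y) \<in> G) xs"
    if "j \<le> L" for j
    using that
  proof (induction j)
    case 0
    obtain v where "v \<in> A"
      using assms(3) by blast
    then show ?case
      by (intro exI[of _ "[v]"]) simp
  next
    case (Suc j)
    then obtain xs where xs: "length xs = Suc j" "distinct xs" "set xs \<subseteq> A"
        "successively (\<lambda>x y. (x, y) \<in> G) xs"
      by auto
    define N where "N = {w\<in>A. (last xs, w) \<in> G}"
    have "last xs \<in> set xs"
      using xs(1) by (auto intro: last_in_set)
    have "N \<subseteq> set xs - {last xs} \<Longrightarrow> card N \<le> j"
      using xs(1,2) card_mono[of "set xs - {last xs}" N] \<open>last xs \<in> set xs\<close>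
      by (simp add: distinct_card)
    moreover have "N \<inter> {last xs} = {}"
      using assms(1) by (auto simp: N_def dest: irreflD)
    moreover have "Suc j \<le> card N"
      using assms(4) Suc.prems xs(3) \<open>last xs \<in> set xs\<close> unfolding N_def by fastforce
    ultimately obtain w where "w \<in> N" "w \<notin> set xs"
      by auto
    then show ?case
      using xs by (intro exI[of _ "xs @ [w]"]) (auto simp: N_def successively_append_iff)
  qed
  then show ?thesis
    by blast
qed

lemma dense_graph_has_path:
  fixes G :: "('a \<times> 'a) set"
  assumes "sym G" "irrefl G" "G \<subseteq> A \<times> A" "finite A" "2 * k * card A < card G"
  shows "\<exists>xs. length xs = k + 2 \<and> distinct xs \<and> set xs \<subseteq> A \<and>
    successively (\<lambda>x y. (x, y) \<in> G) xs"
proof -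
  have "G \<inter> A \<times> A = G"
    using assms(3) by blast
  then obtain A' where A': "A' \<subseteq> A" "A' \<noteq> {}" "\<forall>v\<in>A'. k < card {w\<in>A'. (v, w) \<in> G}"
    using dense_graph_has_min_degree_subgraph[OF assms(1,4), of k] assms(5) by auto
  then have "\<forall>v\<in>A'. Suc k \<le> card {w\<in>A'. (v, w) \<in> G}"
    by (simp add: Suc_le_eq)
  then show ?thesis
    using min_degree_graph_has_path[OF assms(2) finite_subset[OF A'(1) assms(4)] A'(2)] A'(1)
    by fastforce
qed

fun interleave :: "'a list \<Rightarrow> 'a list \<Rightarrow> 'a list" where
  "interleave (a # a' # as) (b # bs) = a # a' # b # interleave as bs"
| "interleave as bs = as"

lemma set_interleave: "set (interleave as bs) \<subseteq> set as \<union> set bs"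
  by (induction as bs rule: interleave.induct) auto

lemma distinct_interleave:
  "distinct as \<Longrightarrow> distinct bs \<Longrightarrow> set as \<inter> set bs = {} \<Longrightarrow> distinct (interleave as bs)"
  by (induction as bs rule: interleave.induct) (use set_interleave in fastforce)+

lemma length_interleave:
  "length as = 2 * length bs + 2 \<Longrightarrow> length (interleave as bs) = 3 * length bs + 2"
  by (induction as bs rule: interleave.induct) auto

lemma interleave_nth_mem:
  assumes "length as = 2 * length bs + 2" "k < 3 * length bs + 2"
  shows "interleave as bs ! k \<in> (if k mod 3 = 2 then set bs else set as)"
  using assms
proof (induction as bs arbitrary: k rule: interleave.induct)
  case (1 a a' as b bs)
  show ?case
  proof (cases "k < 3")
    case True
    then consider "k = 0" | "k = 1" | "k = 2"
      by linarith
    then show ?thesis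
      by cases auto
  next
    case False
    then obtain j where k: "k = j + 3"
      by (metis add.commute le_Suc_ex not_less)
    have "interleave as bs ! j \<in> (if j mod 3 = 2 then set bs else set as)"
      using "1.IH" "1.prems" k by simp
    moreover have "interleave (a # a' # as) (b # bs) ! (j + 3) = interleave as bs ! j"
      by (simp add: numeral_eq_Suc)
    ultimately show ?thesis
      by (auto simp: k)
  qed
qed auto

lemma interleave_triples:
  assumes "length as = 2 * length bs + 2" "successively R as"
    and "\<And>x y b. R x y \<Longrightarrow> b \<in> set bs \<Longrightarrow> {x, y, b} \<in> E"
    and "i + 2 < 3 * length bs + 2"
  shows "{interleave as bs ! i, interleave as bs ! (i + 1), interleave as bs ! (i + 2)} \<in> E"
  using assms
proof (induction as bs arbitrary: i rule: interleave.induct)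
  case (1 a a' as b bs)
  note IH = "1.IH" and prems = "1.prems"
  have "length as = Suc (Suc (2 * length bs))"
    using prems(1) by simp
  then obtain c c' as' where as: "as = c # c' # as'"
    by (auto simp: length_Suc_conv)
  obtain rest where rest: "interleave as bs = c # c' # rest"
    using as by (cases bs) auto
  have R: "R a a'" "R a' c" "R c c'"
    using prems(2) by (simp_all add: as)
  show ?case
  proof (cases "i < 3")
    case True
    then consider "i = 0" | "i = 1" | "i = 2"
      by linarith
    then show ?thesis
    proof cases
      case 1
      then show ?thesis
        using R(1) prems(3) by simp
    next
      case 2
      have "{a', b, c} = {a', c, b}"
        by blast
      then show ?thesis
        using R(2) prems(3) 2 by (simp add: rest)
    next
      case 3
      have "{b, c, c'} = {c, c', b}"
        by blast
      then show ?thesis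
        using R(3) prems(3) 3 by (simp add: rest)
    qed
  next
    case False
    then obtain j where j: "i = j + 3"
      by (metis add.commute le_Suc_ex not_less)
    have "{interleave as bs ! j, interleave as bs ! (j + 1), interleave as bs ! (j + 2)} \<in> E"
    proof (rule IH)
      show "length as = 2 * length bs + 2" "j + 2 < 3 * length bs + 2"
        using prems(1,4) j by simp_all
      show "successively R as"
        using prems(2) by (simp add: as)
      show "\<And>x y b. R x y \<Longrightarrow> b \<in> set bs \<Longrightarrow> {x, y, b} \<in> E"
        using prems(3) by simp
    qed
    then show ?thesis
      by (simp add: j numeral_eq_Suc)
  qed
qed simp_all

lemma tight_path_interleave:
  assumes "length as = 2 * length bs + 2" "distinct as" "distinct bs" "set as \<inter> set bs = {}"
    and "successively R as" "\<And>x y b. R x y \<Longrightarrow> b \<in> set bs \<Longrightarrow> {x, y, b} \<in> E"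
  shows "tight_path E (interleave as bs)"
  unfolding tight_path_def
proof (intro conjI allI impI)
  show "distinct (interleave as bs)"
    using assms(2-4) by (rule distinct_interleave)
  fix i
  assume "i + 2 < length (interleave as bs)"
  then show "{interleave as bs ! i, interleave as bs ! (i + 1), interleave as bs ! (i + 2)} \<in> E"
    using interleave_triples[OF assms(1,5,6)] length_interleave[OF assms(1)] by simp
qed

definition off_diag :: "'a set \<Rightarrow> ('a \<times> 'a) set" where
  "off_diag A = {(x, y) \<in> A \<times> A. x \<noteq> y}"

definition common_nbhd :: "'a set set \<Rightarrow> 'a set \<Rightarrow> 'a \<Rightarrow> 'a \<Rightarrow> 'a set" where
  "common_nbhd E B x y = {b \<in> B. {x, y, b} \<in> E}"

definition link_graph :: "'a set set \<Rightarrow> 'a set \<Rightarrow> 'a set \<Rightarrow> ('a \<times> 'a) set" where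
  "link_graph E A S = {(x, y) \<in> off_diag A. \<forall>b\<in>S. {x, y, b} \<in> E}"

lemma card_off_diag: "finite A \<Longrightarrow> card (off_diag A) = card A * (card A - 1)"
proof -
  assume "finite A"
  have "off_diag A = (SIGMA x:A. A - {x})"
    by (auto simp: off_diag_def)
  then show ?thesis
    using \<open>finite A\<close> by simp
qed

lemma finite_off_diag: "finite A \<Longrightarrow> finite (off_diag A)"
  by (rule finite_subset[of _ "A \<times> A"]) (auto simp: off_diag_def)

lemma sym_link_graph: "sym (link_graph E A S)"
  by (auto simp: link_graph_def off_diag_def insert_commute intro: symI)

lemma irrefl_link_graph: "irrefl (link_graph E A S)"
  by (simp add: link_graph_def off_diag_def irrefl_def)

lemma link_graph_subset: "link_graph E A S \<subseteq> A \<times> A"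
  by (auto simp: link_graph_def off_diag_def)

lemma card_dist_triples_eq:
  assumes "A \<inter> B = {}"
  shows "card (dist_triples A A B) = card (off_diag A) * card B"
proof -
  have "dist_triples A A B = (\<lambda>((x, y), b). (x, y, b)) ` (off_diag A \<times> B)"
    using assms by (force simp: dist_triples_def off_diag_def)
  moreover have "inj_on (\<lambda>((x, y), b). (x, y, b)) (off_diag A \<times> B)"
    by (auto simp: inj_on_def)
  ultimately show ?thesis
    by (simp add: card_image card_cartesian_product)
qed

lemma card_edge_triples_eq:
  assumes "A \<inter> B = {}" "finite A" "finite B"
  shows "card (edge_triples E A A B) = (\<Sum>(x, y)\<in>off_diag A. card (common_nbhd E B x y))"
proof -
  let ?T = "Sigma (off_diag A) (\<lambda>(x, y). common_nbhd E B x y)"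
  have "edge_triples E A A B = (\<lambda>((x, y), b). (x, y, b)) ` ?T"
    using assms(1) by (force simp: edge_triples_def dist_triples_def off_diag_def common_nbhd_def)
  moreover have "inj_on (\<lambda>((x, y), b). (x, y, b)) ?T"
    by (auto simp: inj_on_def)
  ultimately have "card (edge_triples E A A B) = card ?T"
    by (simp add: card_image)
  also have "\<dots> = (\<Sum>p\<in>off_diag A. card ((\<lambda>(x, y). common_nbhd E B x y) p))"
    using assms(2,3) by (intro card_SigmaI) (auto simp: finite_off_diag common_nbhd_def)
  also have "\<dots> = (\<Sum>(x, y)\<in>off_diag A. card (common_nbhd E B x y))"
    by (rule sum.cong) (auto split: prod.split)
  finally show ?thesis .
qed

lemma density_le_mean_codegree:
  assumes "A \<inter> B = {}" "finite A" "finite B" "\<eta> \<le> density3 E A A B"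
  shows "\<eta> * card B * card (off_diag A) \<le> (\<Sum>(x, y)\<in>off_diag A. real (card (common_nbhd E B x y)))"
    (is "_ \<le> ?sum")
proof (cases "card (off_diag A) * card B = 0")
  case True
  moreover have "0 \<le> ?sum"
    by (rule sum_nonneg) (simp split: prod.split)
  ultimately show ?thesis
    by auto
next
  case False
  have "?sum = card (edge_triples E A A B)"
    using card_edge_triples_eq[OF assms(1-3)] by (simp add: of_nat_sum case_prod_beta)
  then have "\<eta> \<le> ?sum / (card (off_diag A) * card B)"
    using assms(4) by (simp add: density3_def card_dist_triples_eq[OF assms(1)])
  then show ?thesis
    using False by (simp add: pos_le_divide_eq mult.commute mult.left_commute)
qed

lemma sum_card_containing_eq_sum_binomial:
  assumes "finite P" "finite B" "\<And>p. p \<in> P \<Longrightarrow> N p \<subseteq> B"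
  shows "(\<Sum>S | S \<subseteq> B \<and> card S = k. card {p \<in> P. S \<subseteq> N p})
    = (\<Sum>p\<in>P. card (N p) choose k)"
proof -
  let ?F = "{S. S \<subseteq> B \<and> card S = k}"
  have "finite ?F"
    using assms(2) by simp
  have "(\<Sum>S\<in>?F. card {p \<in> P. S \<subseteq> N p}) = (\<Sum>S\<in>?F. \<Sum>p\<in>P. of_bool (S \<subseteq> N p))"
    using assms(1) by (simp add: Int_def)
  also have "\<dots> = (\<Sum>p\<in>P. \<Sum>S\<in>?F. of_bool (S \<subseteq> N p))"
    by (rule sum.swap)
  also have "\<dots> = (\<Sum>p\<in>P. card {S. S \<subseteq> N p \<and> card S = k})"
    using \<open>finite ?F\<close> assms(3) by (intro sum.cong) (auto simp: Int_def intro!: arg_cong[of _ _ card])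
  also have "\<dots> = (\<Sum>p\<in>P. card (N p) choose k)"
    using assms(2,3) by (intro sum.cong refl n_subsets) (auto intro: finite_subset)
  finally show ?thesis .
qed

lemma exists_link_graph_ge_average:
  assumes "finite A" "finite B" "d \<le> card B"
  shows "\<exists>S\<subseteq>B. card S = d \<and>
    (\<Sum>(x, y)\<in>off_diag A. card (common_nbhd E B x y) choose d) \<le> card (link_graph E A S) * (card B choose d)"
proof -
  define F where "F = {S. S \<subseteq> B \<and> card S = d}"
  have "finite F" "card F = card B choose d"
    using assms(2) by (simp_all add: F_def n_subsets)
  then have "F \<noteq> {}"
    using assms(3) by (auto simp: zero_less_binomial_iff)
  then have "Max ((\<lambda>T. card (link_graph E A T)) ` F) \<in> (\<lambda>T. card (link_graph E A T)) ` F"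
    using \<open>finite F\<close> by (intro Max_in) auto
  then obtain S where S: "S \<in> F" "card (link_graph E A S) = Max ((\<lambda>T. card (link_graph E A T)) ` F)"
    by auto
  define N where "N p = common_nbhd E B (fst p) (snd p)" for p
  have "link_graph E A T = {p \<in> off_diag A. T \<subseteq> N p}" if "T \<in> F" for T
    using that by (auto simp: link_graph_def common_nbhd_def F_def N_def)
  then have "(\<Sum>T\<in>F. card (link_graph E A T)) = (\<Sum>T\<in>F. card {p \<in> off_diag A. T \<subseteq> N p})"
    by simp
  also have "\<dots> = (\<Sum>p\<in>off_diag A. card (N p) choose d)"
    unfolding F_def using assms(1,2)
    by (intro sum_card_containing_eq_sum_binomial) (auto simp: finite_off_diag N_def common_nbhd_def)
  also have "\<dots> = (\<Sum>(x, y)\<in>off_diag A. card (common_nbhd E B x y) choose d)"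
    by (simp add: N_def case_prod_beta)
  finally have "(\<Sum>(x, y)\<in>off_diag A. card (common_nbhd E B x y) choose d) = (\<Sum>T\<in>F. card (link_graph E A T))"
    by simp
  also have "\<dots> \<le> of_nat (card F) * card (link_graph E A S)"
    by (rule sum_bounded_above) (use \<open>finite F\<close> in \<open>auto simp: S(2) intro!: Max_ge\<close>)
  finally show ?thesis
    using S(1) \<open>card F = card B choose d\<close> by (auto simp: F_def mult.commute)
qed

lemma exists_large_link_graph:
  fixes \<eta> :: real
  assumes "0 < \<eta>" "\<eta> \<le> 1" "finite A" "finite B" "A \<inter> B = {}"
    and "real d \<le> \<eta> * card B" "\<eta> \<le> density3 E A A B"
  shows "\<exists>S\<subseteq>B. card S = d \<and>
    card (off_diag A) * (\<eta> ^ d * fact d / real d ^ d) \<le> card (link_graph E A S)"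
proof -
  define c where "c p = card (common_nbhd E B (fst p) (snd p))" for p
  have "real d \<le> card B"
    using assms(2,6) mult_right_mono[OF assms(2), of "card B"] by simp
  then obtain S where S: "S \<subseteq> B" "card S = d"
      "(\<Sum>p\<in>off_diag A. c p choose d) \<le> card (link_graph E A S) * (card B choose d)"
    using exists_link_graph_ge_average[OF assms(3,4)] by (auto simp: c_def case_prod_beta)
  have "card (off_diag A) * (\<eta> ^ d * fact d / real d ^ d) \<le> card (link_graph E A S)"
  proof (cases "off_diag A = {}")
    case True
    then show ?thesis
      by simp
  next
    case False
    define \<mu> where "\<mu> = (\<Sum>p\<in>off_diag A. real (c p)) / card (off_diag A)"
    have P: "finite (off_diag A)" "0 < card (off_diag A)"
      using assms(3) False finite_off_diag by (auto simp: card_gt_0_iff)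
    have "\<eta> * card B \<le> \<mu>"
      using density_le_mean_codegree[OF assms(5,3,4,7)] P
      by (simp add: \<mu>_def c_def field_simps case_prod_beta)
    have "card (off_diag A) * (\<eta> ^ d * fact d / real d ^ d) * (real (card B) gchoose d)
        \<le> card (off_diag A) * (\<mu> gchoose d)"
      using mult_left_mono[OF gbinomial_ratio_lower_bound[OF assms(1,2,6) \<open>\<eta> * card B \<le> \<mu>\<close>]
          of_nat_0_le_iff]
      by (simp only: mult.assoc)
    also have "\<dots> \<le> (\<Sum>p\<in>off_diag A. real (c p choose d))"
      using card_mult_gbinomial_mean_le_sum_binomial[OF P(1) False] assms(6) \<open>\<eta> * card B \<le> \<mu>\<close>
      by (simp add: \<mu>_def)
    also have "\<dots> \<le> card (link_graph E A S) * (real (card B) gchoose d)"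
      unfolding binomial_gbinomial[symmetric] of_nat_sum[symmetric] of_nat_mult[symmetric] of_nat_le_iff
      by (rule S(3))
    finally have "card (off_diag A) * (\<eta> ^ d * fact d / real d ^ d) * (real (card B) gchoose d)
        \<le> card (link_graph E A S) * (real (card B) gchoose d)" .
    moreover have "0 < real (card B) gchoose d"
      using \<open>real d \<le> card B\<close> by (simp add: binomial_gbinomial[symmetric] zero_less_binomial_iff)
    ultimately show ?thesis
      by (rule mult_right_le_imp_le)
  qed
  with S(1,2) show ?thesis
    by blast
qed

lemma four_d_n_less_scaled_pairs:
  fixes \<eta> :: real
  assumes "0 < \<eta>" "\<eta> \<le> 1" "1 \<le> d" "4 * real d * exp (real d) / \<eta> ^ d \<le> n"
  shows "real (4 * d * n) < real (n * (n - 1)) * (\<eta> ^ d * fact d / real d ^ d)"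
proof -
  have "0 < \<eta> ^ d" "\<eta> ^ d \<le> 1"
    using assms(1,2) by (simp_all add: power_le_one)
  then have size: "4 * real d * exp (real d) \<le> n * \<eta> ^ d"
    using assms(4) by (simp add: divide_le_eq)
  have "4 * 1 * 1 \<le> 4 * real d * exp (real d)"
    using assms(3) by (intro mult_mono) auto
  also have "\<dots> \<le> n"
    using size mult_left_mono[OF \<open>\<eta> ^ d \<le> 1\<close>, of n] by simp
  finally have "4 \<le> n"
    by simp
  have "2 \<le> exp (1 :: real)"
    using exp_ge_add_one_self[of 1] by simp
  then have "real n < exp 1 * (real n - 1)"
    using \<open>4 \<le> n\<close> mult_right_mono[of 2 "exp 1" "real n - 1"] by simp
  then have "4 * real d * n < 4 * real d * (exp 1 * (real n - 1))"
    using assms(3) by (intro mult_strict_left_mono) auto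
  also have "\<dots> = 4 * real d * exp (real d) * (real n - 1) / exp (real d - 1)"
    by (simp add: exp_diff field_simps)
  finally have "real (4 * d * n) < 4 * real d * exp (real d) * (real n - 1) / exp (real d - 1)"
    by simp
  also have "\<dots> \<le> n * \<eta> ^ d * (real n - 1) / exp (real d - 1)"
    using size \<open>4 \<le> n\<close> by (intro divide_right_mono mult_right_mono) auto
  also have "\<dots> = n * \<eta> ^ d * (real n - 1) * (1 / exp (real d - 1))"
    by simp
  also have "\<dots> \<le> n * \<eta> ^ d * (real n - 1) * (fact d / real d ^ d)"
  proof (rule mult_left_mono)
    show "1 / exp (real d - 1) \<le> fact d / real d ^ d"
      using power_self_le_exp_mult_fact[of d] assms(3) by (simp add: field_simps)
    show "0 \<le> n * \<eta> ^ d * (real n - 1)"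
      using \<open>0 < \<eta> ^ d\<close> \<open>4 \<le> n\<close> by simp
  qed
  also have "\<dots> = real (n * (n - 1)) * (\<eta> ^ d * fact d / real d ^ d)"
    using \<open>4 \<le> n\<close> by (simp add: of_nat_diff)
  finally show ?thesis .
qed

theorem lemma5p5:
  fixes \<eta> :: real and d :: nat and V :: "'a set" and E :: "'a set set" and A B :: "'a set"
  assumes "0 < \<eta>" "\<eta> \<le> 1" "d \<ge> 1"
    and "three_graph V E"
    and "A \<subseteq> V" "B \<subseteq> V" "A \<inter> B = {}"
    and "real (card A) \<ge> 4 * real d * exp (real d) / \<eta> ^ d"
    and "real (card B) \<ge> real d / \<eta>"
    and "clique3 E A"
    and "density3 E A A B \<ge> \<eta>"
  shows "\<exists>vs. length vs = 3 * d + 2 \<and> tight_path E vs \<and>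
           (\<forall>k < 3 * d + 2. (k mod 3 = 2 \<longrightarrow> vs ! k \<in> B) \<and> (k mod 3 \<noteq> 2 \<longrightarrow> vs ! k \<in> A))"
proof -
  have fin: "finite A" "finite B"
    using assms(4-6) by (auto simp: three_graph_def intro: finite_subset)
  have "real d \<le> \<eta> * card B"
    using assms(1,9) by (simp add: field_simps)
  then obtain S where S: "S \<subseteq> B" "card S = d"
      "card (off_diag A) * (\<eta> ^ d * fact d / real d ^ d) \<le> card (link_graph E A S)"
    using exists_large_link_graph[OF assms(1,2) fin assms(7) _ assms(11)] by blast
  have "real (4 * d * card A) < card (off_diag A) * (\<eta> ^ d * fact d / real d ^ d)"
    unfolding card_off_diag[OF fin(1)] by (rule four_d_n_less_scaled_pairs[OF assms(1-3,8)])
  with S(3) have "real (2 * (2 * d) * card A) < real (card (link_graph E A S))"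
    by simp
  then have "2 * (2 * d) * card A < card (link_graph E A S)"
    by (simp only: of_nat_less_iff)
  then obtain as where as: "length as = 2 * d + 2" "distinct as" "set as \<subseteq> A"
      "successively (\<lambda>x y. (x, y) \<in> link_graph E A S) as"
    using dense_graph_has_path[OF sym_link_graph irrefl_link_graph link_graph_subset fin(1)] by blast
  obtain bs where bs: "set bs = S" "distinct bs" "length bs = d"
    using finite_distinct_list[OF finite_subset[OF S(1) fin(2)]] S(2) distinct_card by metis
  have "set as \<inter> set bs = {}"
    using as(3) bs(1) S(1) assms(7) by blast
  show ?thesis
  proof (intro exI[of _ "interleave as bs"] conjI allI impI)
    show "length (interleave as bs) = 3 * d + 2"
      using length_interleave[of as bs] as(1) bs(3) by simp
    show "tight_path E (interleave as bs)"
      using as bs \<open>set as \<inter> set bs = {}\<close>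
      by (intro tight_path_interleave[where R = "\<lambda>x y. (x, y) \<in> link_graph E A S"])
        (auto simp: link_graph_def)
    fix k
    assume "k < 3 * d + 2"
    then have "interleave as bs ! k \<in> (if k mod 3 = 2 then S else A)"
      using interleave_nth_mem[of as bs k] as(1,3) bs by auto
    with S(1) show "k mod 3 = 2 \<Longrightarrow> interleave as bs ! k \<in> B"
      and "k mod 3 \<noteq> 2 \<Longrightarrow> interleave as bs ! k \<in> A"
      by auto
  qed
qed

end
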